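(* For every irrational real $\alpha$ one has $\mathfrak k^*(\alpha)\ge\mathfrak k(\alpha)\ge2\lambda(\alpha)$, and if $\alpha$ is equivalent to $\sqrt2$ then $\mathfrak k^*(\alpha)=\mathfrak k(\alpha)=2\lambda(\alpha)$.
   Context: For irrational real $\alpha$ with continued fraction $\alpha=[a_0;a_1,a_2,\dots]$ and convergents $p_n/q_n$ ($n\ge0$), define for real $t\ge1$: $\psi_\alpha(t)=\min_{1\le q\le t,\,q\in\mathbb Z}\|q\alpha\|$ (where $\|x\|$ is the distance to the nearest integer), $\psi^{[2]}_\alpha(t)=\min\{|q\alpha-p|: p,q\in\mathbb Z,\ 1\le q\le t,\ (p,q)\ne(p_n,q_n)\ \forall n\ge0\}$, and $\psi^{[2]*}_\alpha(t)=\min\{|q\alpha-p|: p,q\in\mathbb Z,\ 1\le q\le t,\ p/q\ne p_n/q_n\ \forall n\ge0\}$. Set $\lambda(\alpha)=\liminf_{t\to\infty}t\psi_\alpha(t)$, $\mathfrak k(\alpha)=\liminf_{t\to\infty}t\psi^{[2]}_\alpha(t)$, $\mathfrak k^*(\alpha)=\liminf_{t\to\infty}t\psi^{[2]*}_\alpha(t)$. Two irrationals are equivalent if they are related by a Möbius map $x\mapsto(ax+b)/(cx+d)$ with integer entries and $ad-bc=\pm1$. *)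

theory Defs
  imports Complex_Main "HOL-Library.Extended_Real" "HOL-Library.Liminf_Limsup"
begin

fun cf_rem :: "real \<Rightarrow> nat \<Rightarrow> real" where
  "cf_rem x 0 = x"
| "cf_rem x (Suc n) = 1 / (cf_rem x n - of_int \<lfloor>cf_rem x n\<rfloor>)"

definition cf_a :: "real \<Rightarrow> nat \<Rightarrow> int" where
  "cf_a x n = \<lfloor>cf_rem x n\<rfloor>"

fun cf_p :: "real \<Rightarrow> nat \<Rightarrow> int" where
  "cf_p x 0 = cf_a x 0"
| "cf_p x (Suc 0) = cf_a x 1 * cf_a x 0 + 1"
| "cf_p x (Suc (Suc n)) = cf_a x (Suc (Suc n)) * cf_p x (Suc n) + cf_p x n"

fun cf_q :: "real \<Rightarrow> nat \<Rightarrow> int" where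
  "cf_q x 0 = 1"
| "cf_q x (Suc 0) = cf_a x 1"
| "cf_q x (Suc (Suc n)) = cf_a x (Suc (Suc n)) * cf_q x (Suc n) + cf_q x n"

definition dist_int :: "real \<Rightarrow> real" where
  "dist_int x = \<bar>x - of_int (round x)\<bar>"

definition psi :: "real \<Rightarrow> real \<Rightarrow> real" where
  "psi \<alpha> t = Inf {dist_int (of_int q * \<alpha>) | q::int. 1 \<le> q \<and> real_of_int q \<le> t}"

definition psi2 :: "real \<Rightarrow> real \<Rightarrow> real" where
  "psi2 \<alpha> t = Inf {\<bar>of_int q * \<alpha> - of_int p\<bar> | p q::int.
      1 \<le> q \<and> real_of_int q \<le> t \<and> (\<forall>n. (p, q) \<noteq> (cf_p \<alpha> n, cf_q \<alpha> n))}"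

definition psi2star :: "real \<Rightarrow> real \<Rightarrow> real" where
  "psi2star \<alpha> t = Inf {\<bar>of_int q * \<alpha> - of_int p\<bar> | p q::int.
      1 \<le> q \<and> real_of_int q \<le> t \<and>
      (\<forall>n. real_of_int p / real_of_int q \<noteq> real_of_int (cf_p \<alpha> n) / real_of_int (cf_q \<alpha> n))}"

definition lagrange :: "real \<Rightarrow> ereal" where
  "lagrange \<alpha> = Liminf at_top (\<lambda>t::real. ereal (t * psi \<alpha> t))"

definition kfrak :: "real \<Rightarrow> ereal" where
  "kfrak \<alpha> = Liminf at_top (\<lambda>t::real. ereal (t * psi2 \<alpha> t))"

definition kfrak_star :: "real \<Rightarrow> ereal" where
  "kfrak_star \<alpha> = Liminf at_top (\<lambda>t::real. ereal (t * psi2star \<alpha> t))"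

definition moebius_equiv :: "real \<Rightarrow> real \<Rightarrow> bool" where
  "moebius_equiv x y \<longleftrightarrow> (\<exists>a b c d :: int. \<bar>a * d - b * c\<bar> = 1 \<and>
      x = (of_int a * y + of_int b) / (of_int c * y + of_int d))"

end

theory Submission
  imports Defs
begin

text \<open>
  Between consecutive convergent denominators q_k <= q < q_(k+1), every lattice point (p, q) is an
  integer combination y (p_k, q_k) + z (p_(k+1), q_(k+1)) with y z <= 0, and since the errors
  q_k alpha - p_k alternate in sign, |q alpha - p| = |y| |q_k alpha - p_k| + |z| |q_(k+1) alpha - p_(k+1)|.
  Unless (p, q) is a convergent, this forces q |q alpha - p| >= 1, or (p, q) is an intermediate
  fraction and q |q alpha - p| is at least the sum of two of the values u_j = q_j |q_j alpha - p_j|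
  for j = k-1, k, k+1. As eventually all u_j exceed any number below lambda(alpha) and
  lambda(alpha) <= 1/2, this gives kfrak >= 2 lambda; excluding more pairs only raises the
  minimum, so kfrak* >= kfrak.

  If alpha is equivalent to sqrt 2, pulling (p, q) back to a pair (P, Q) for sqrt 2 makes
  P^2 - 2 Q^2 a nonzero integer, whence lambda(alpha) >= 1/(2 sqrt 2). Conversely the images of the
  mediants of consecutive convergents of sqrt 2 are not convergents of alpha, being beaten by a
  neighbour with smaller denominator, and satisfy q |q alpha - p| -> 1/sqrt 2. Hence
  kfrak*(alpha) <= 1/sqrt 2 <= 2 lambda(alpha) and all inequalities are equalities.
\<close>

section \<open>Continued fraction convergents\<close>

text \<open>Convergents with the index shifted by one: cf_num x (Suc n) = p_n and cf_den x (Suc n) = q_n,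
  while index 0 holds the conventional pair (p_{-1}, q_{-1}) = (1, 0), so that the recurrences and
  the determinant identity hold from the start.\<close>

definition cf_num :: "real \<Rightarrow> nat \<Rightarrow> int" where
  "cf_num x k = (case k of 0 \<Rightarrow> 1 | Suc n \<Rightarrow> cf_p x n)"

definition cf_den :: "real \<Rightarrow> nat \<Rightarrow> int" where
  "cf_den x k = (case k of 0 \<Rightarrow> 0 | Suc n \<Rightarrow> cf_q x n)"

definition cf_err :: "real \<Rightarrow> nat \<Rightarrow> real" where
  "cf_err x k = of_int (cf_den x k) * x - of_int (cf_num x k)"

definition cf_qerr :: "real \<Rightarrow> nat \<Rightarrow> real" where
  "cf_qerr x k = of_int (cf_den x k) * \<bar>cf_err x k\<bar>"

lemma cf_num_0 [simp]: "cf_num x 0 = 1"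
  and cf_num_1 [simp]: "cf_num x (Suc 0) = cf_a x 0"
  and cf_den_0 [simp]: "cf_den x 0 = 0"
  and cf_den_1 [simp]: "cf_den x (Suc 0) = 1"
  by (simp_all add: cf_num_def cf_den_def)

lemma cf_p_eq_num: "cf_p x n = cf_num x (Suc n)"
  and cf_q_eq_den: "cf_q x n = cf_den x (Suc n)"
  by (simp_all add: cf_num_def cf_den_def)

lemma cf_num_Suc_Suc: "cf_num x (Suc (Suc k)) = cf_a x (Suc k) * cf_num x (Suc k) + cf_num x k"
  by (cases k) (simp_all add: cf_num_def)

lemma cf_den_Suc_Suc: "cf_den x (Suc (Suc k)) = cf_a x (Suc k) * cf_den x (Suc k) + cf_den x k"
  by (cases k) (simp_all add: cf_den_def)

lemma cf_err_0 [simp]: "cf_err x 0 = -1"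
  by (simp add: cf_err_def)

lemma cf_err_Suc_Suc: "cf_err x (Suc (Suc k)) = of_int (cf_a x (Suc k)) * cf_err x (Suc k) + cf_err x k"
  by (simp add: cf_err_def cf_num_Suc_Suc cf_den_Suc_Suc algebra_simps)

lemma cf_det: "cf_num x (Suc k) * cf_den x k - cf_num x k * cf_den x (Suc k) = (-1) ^ Suc k"
  by (induction k) (simp_all add: cf_num_Suc_Suc cf_den_Suc_Suc algebra_simps)

lemma cf_lattice_coords:
  fixes p q :: int
  obtains y z where "p = y * cf_num x k + z * cf_num x (Suc k)"
    and "q = y * cf_den x k + z * cf_den x (Suc k)"
proof -
  define s :: int where "s = (-1) ^ Suc k"
  have ss: "s * s = 1"
    by (simp add: s_def flip: power_add)
  have det: "cf_num x (Suc k) * cf_den x k - cf_num x k * cf_den x (Suc k) = s"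
    using cf_det by (simp add: s_def)
  show thesis
  proof (rule that[of "s * (q * cf_num x (Suc k) - p * cf_den x (Suc k))"
                      "s * (p * cf_den x k - q * cf_num x k)"])
    show "p = s * (q * cf_num x (Suc k) - p * cf_den x (Suc k)) * cf_num x k
              + s * (p * cf_den x k - q * cf_num x k) * cf_num x (Suc k)"
      using arg_cong[OF det, of "\<lambda>d. s * p * d"] ss by (simp add: algebra_simps)
    show "q = s * (q * cf_num x (Suc k) - p * cf_den x (Suc k)) * cf_den x k
              + s * (p * cf_den x k - q * cf_num x k) * cf_den x (Suc k)"
      using arg_cong[OF det, of "\<lambda>d. s * q * d"] ss by (simp add: algebra_simps)
  qed
qed

locale irrational_cf =
  fixes \<alpha> :: real
  assumes irrational: "\<alpha> \<notin> \<rat>"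
begin

abbreviation r :: "nat \<Rightarrow> real" where "r \<equiv> cf_rem \<alpha>"

declare cf_rem.simps(2) [simp del]

lemma cf_rem_not_rat: "r n \<notin> \<rat>"
proof (induction n)
  case (Suc n)
  show ?case
  proof
    assume "r (Suc n) \<in> \<rat>"
    then have "inverse (r n - of_int \<lfloor>r n\<rfloor>) \<in> \<rat>"
      by (simp add: cf_rem.simps(2) inverse_eq_divide)
    then have "r n - of_int \<lfloor>r n\<rfloor> + of_int \<lfloor>r n\<rfloor> \<in> \<rat>"
      by (metis Rats_add Rats_inverse Rats_of_int inverse_inverse_eq)
    with Suc show False by simp
  qed
qed (use irrational in simp)

lemma frac_cf_rem_pos: "0 < r n - of_int \<lfloor>r n\<rfloor>"
proof -
  have "r n \<noteq> of_int \<lfloor>r n\<rfloor>"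
    using cf_rem_not_rat[of n] by (metis Rats_of_int)
  then show ?thesis
    using of_int_floor_le[of "r n"] by linarith
qed

lemma cf_rem_Suc_gt_1: "1 < r (Suc n)"
proof -
  have "r n - of_int \<lfloor>r n\<rfloor> < 1"
    by linarith
  then show ?thesis
    using frac_cf_rem_pos[of n] by (simp add: cf_rem.simps(2) divide_less_eq)
qed

lemma cf_a_Suc_ge_1: "1 \<le> cf_a \<alpha> (Suc n)"
  using cf_rem_Suc_gt_1[of n] unfolding cf_a_def by linarith

lemma cf_a_less_cf_rem: "of_int (cf_a \<alpha> n) < r n"
  using frac_cf_rem_pos[of n] by (simp add: cf_a_def)

lemma cf_err_Suc: "cf_err \<alpha> (Suc k) = - cf_err \<alpha> k / r (Suc k)"
proof (induction k)
  case 0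
  show ?case
    using frac_cf_rem_pos[of 0] by (simp add: cf_rem.simps(2) cf_err_def cf_a_def field_simps)
next
  case (Suc k)
  have "cf_err \<alpha> k = - r (Suc k) * cf_err \<alpha> (Suc k)"
    using Suc cf_rem_Suc_gt_1[of k] by (simp add: field_simps)
  then have "cf_err \<alpha> (Suc (Suc k)) = (of_int (cf_a \<alpha> (Suc k)) - r (Suc k)) * cf_err \<alpha> (Suc k)"
    by (simp add: cf_err_Suc_Suc algebra_simps)
  also have "\<dots> = - cf_err \<alpha> (Suc k) / r (Suc (Suc k))"
    using cf_a_less_cf_rem[of "Suc k"] by (simp add: cf_rem.simps(2) cf_a_def field_simps)
  finally show ?case .
qed

lemma abs_cf_err_Suc: "\<bar>cf_err \<alpha> (Suc k)\<bar> = \<bar>cf_err \<alpha> k\<bar> / r (Suc k)"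
  using cf_rem_Suc_gt_1[of k] by (simp add: cf_err_Suc abs_divide)

lemma cf_err_Suc_mult_nonpos: "cf_err \<alpha> k * cf_err \<alpha> (Suc k) \<le> 0"
  using cf_rem_Suc_gt_1[of k]
  by (simp add: cf_err_Suc mult_le_0_iff divide_nonneg_pos divide_nonpos_pos)

lemma abs_cf_err_pos: "0 < \<bar>cf_err \<alpha> k\<bar>"
proof (induction k)
  case (Suc k)
  then show ?case
    using cf_rem_Suc_gt_1[of k] by (simp add: abs_cf_err_Suc)
qed simp

lemma abs_cf_err_Suc_less: "\<bar>cf_err \<alpha> (Suc k)\<bar> < \<bar>cf_err \<alpha> k\<bar>"
  using abs_cf_err_pos[of k] cf_rem_Suc_gt_1[of k] by (simp add: abs_cf_err_Suc divide_less_eq)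

lemma abs_cf_err_antimono: "m \<le> n \<Longrightarrow> \<bar>cf_err \<alpha> n\<bar> \<le> \<bar>cf_err \<alpha> m\<bar>"
proof (induction n rule: dec_induct)
  case (step n)
  then show ?case
    using abs_cf_err_Suc_less[of n] by linarith
qed simp

lemma cf_den_Suc_ge_1: "1 \<le> cf_den \<alpha> (Suc k)"
proof (induction k rule: less_induct)
  case (less k)
  show ?case
  proof (cases k)
    case (Suc m)
    have "1 * 1 \<le> cf_a \<alpha> (Suc m) * cf_den \<alpha> (Suc m)"
      using cf_a_Suc_ge_1[of m] less[of m] Suc by (intro mult_mono) auto
    moreover have "0 \<le> cf_den \<alpha> m"
      using less[of "m - 1"] Suc by (cases m) auto
    ultimately show ?thesis
      using Suc by (simp add: cf_den_Suc_Suc)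
  qed simp
qed

lemma cf_den_nonneg: "0 \<le> cf_den \<alpha> k"
  using cf_den_Suc_ge_1[of "k - 1"] by (cases k) auto

lemma cf_den_Suc_Suc_ge: "cf_den \<alpha> (Suc k) + cf_den \<alpha> k \<le> cf_den \<alpha> (Suc (Suc k))"
  using mult_right_mono[OF cf_a_Suc_ge_1[of k] cf_den_nonneg[of "Suc k"]]
  by (simp add: cf_den_Suc_Suc)

lemma cf_den_le_Suc: "cf_den \<alpha> k \<le> cf_den \<alpha> (Suc k)"
  using cf_den_Suc_Suc_ge[of "k - 1"] cf_den_nonneg[of "k - 1"] by (cases k) auto

lemma cf_den_mono: "m \<le> n \<Longrightarrow> cf_den \<alpha> m \<le> cf_den \<alpha> n"
proof (induction n rule: dec_induct)
  case (step n)
  then show ?case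
    using cf_den_le_Suc[of n] by linarith
qed simp

lemma cf_den_Suc_ge: "int k \<le> cf_den \<alpha> (Suc k)"
proof (induction k rule: less_induct)
  case (less k)
  consider "k \<le> 1" | m where "k = Suc (Suc m)"
    by (metis Suc_le_mono le0 not0_implies_Suc One_nat_def)
  then show ?case
  proof cases
    case 1
    then show ?thesis
      using cf_den_Suc_ge_1[of k] by linarith
  next
    case 2
    then show ?thesis
      using less[of "Suc m"] cf_den_Suc_ge_1[of m] cf_den_Suc_Suc_ge[of "Suc m"] by simp
  qed
qed

lemma eventually_cf_den_ge: "\<exists>K. \<forall>k\<ge>K. T \<le> real_of_int (cf_den \<alpha> k)"
proof -
  obtain n :: nat where "T \<le> real n"
    using real_arch_simple by blast
  moreover have "int n \<le> cf_den \<alpha> k" if "Suc n \<le> k" for k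
    using cf_den_Suc_ge[of n] cf_den_mono[OF that] by linarith
  ultimately show ?thesis
    by (intro exI[of _ "Suc n"]) (smt (verit) of_int_le_iff of_int_of_nat_eq)
qed

lemma cf_den_err_identity:
  "of_int (cf_den \<alpha> (Suc k)) * \<bar>cf_err \<alpha> k\<bar> + of_int (cf_den \<alpha> k) * \<bar>cf_err \<alpha> (Suc k)\<bar> = 1"
proof -
  have rk: "0 < r (Suc k)"
    using cf_rem_Suc_gt_1[of k] by simp
  have "of_int (cf_den \<alpha> (Suc k)) * cf_err \<alpha> k - of_int (cf_den \<alpha> k) * cf_err \<alpha> (Suc k)
        = of_int (cf_num \<alpha> (Suc k) * cf_den \<alpha> k - cf_num \<alpha> k * cf_den \<alpha> (Suc k))"
    by (simp add: cf_err_def algebra_simps)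
  also have "\<dots> = (-1) ^ Suc k"
    by (simp only: cf_det) simp
  finally have "cf_err \<alpha> k * (of_int (cf_den \<alpha> (Suc k)) + of_int (cf_den \<alpha> k) / r (Suc k)) = (-1) ^ Suc k"
    by (simp add: cf_err_Suc field_simps)
  then have "\<bar>cf_err \<alpha> k * (of_int (cf_den \<alpha> (Suc k)) + of_int (cf_den \<alpha> k) / r (Suc k))\<bar> = 1"
    by simp
  moreover have "0 \<le> of_int (cf_den \<alpha> (Suc k)) + of_int (cf_den \<alpha> k) / r (Suc k)"
    using cf_den_nonneg[of k] cf_den_nonneg[of "Suc k"] rk by simp
  ultimately have "\<bar>cf_err \<alpha> k\<bar> * (of_int (cf_den \<alpha> (Suc k)) + of_int (cf_den \<alpha> k) / r (Suc k)) = 1"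
    by (simp add: abs_mult)
  then show ?thesis
    using rk by (simp add: abs_cf_err_Suc field_simps)
qed

lemma cf_qerr_nonneg: "0 \<le> cf_qerr \<alpha> k"
  using cf_den_nonneg[of k] by (simp add: cf_qerr_def)

lemma cf_qerr_Suc_add_le: "cf_qerr \<alpha> k + cf_qerr \<alpha> (Suc k) \<le> 1"
proof -
  have "0 \<le> (of_int (cf_den \<alpha> (Suc k)) - of_int (cf_den \<alpha> k)) * (\<bar>cf_err \<alpha> k\<bar> - \<bar>cf_err \<alpha> (Suc k)\<bar>)"
    using cf_den_le_Suc[of k] abs_cf_err_Suc_less[of k] by (intro mult_nonneg_nonneg) auto
  then show ?thesis
    using cf_den_err_identity[of k] by (simp add: cf_qerr_def algebra_simps)
qed

lemma cf_coords_between: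
  fixes p q :: int
  assumes k: "1 \<le> k" and q: "cf_den \<alpha> k \<le> q" "q < cf_den \<alpha> (Suc k)"
  obtains y z where "p = y * cf_num \<alpha> k + z * cf_num \<alpha> (Suc k)"
    and "q = y * cf_den \<alpha> k + z * cf_den \<alpha> (Suc k)" and "y \<noteq> 0" and "y * z \<le> 0"
proof -
  obtain y z where p: "p = y * cf_num \<alpha> k + z * cf_num \<alpha> (Suc k)"
    and q_eq: "q = y * cf_den \<alpha> k + z * cf_den \<alpha> (Suc k)"
    by (rule cf_lattice_coords)
  have d: "1 \<le> cf_den \<alpha> k" "cf_den \<alpha> k \<le> cf_den \<alpha> (Suc k)"
    using cf_den_Suc_ge_1[of "k - 1"] k cf_den_le_Suc[of k] by auto
  have "y \<noteq> 0"
  proof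
    assume "y = 0"
    then have "q = z * cf_den \<alpha> (Suc k)"
      using q_eq by simp
    moreover have "z * cf_den \<alpha> (Suc k) \<le> 0 \<or> cf_den \<alpha> (Suc k) \<le> z * cf_den \<alpha> (Suc k)"
      using d by (cases "z \<le> 0") (auto simp: mult_nonpos_nonneg)
    ultimately show False
      using q d by linarith
  qed
  moreover have "y * z \<le> 0"
  proof (rule ccontr)
    assume "\<not> y * z \<le> 0"
    then have "0 < y \<and> 0 < z \<or> y < 0 \<and> z < 0"
      by (simp add: not_le zero_less_mult_iff)
    then consider "1 \<le> y" "1 \<le> z" | "y \<le> -1" "z \<le> -1"
      by linarith
    then show False
    proof cases
      case 1
      then have "cf_den \<alpha> k \<le> y * cf_den \<alpha> k" "cf_den \<alpha> (Suc k) \<le> z * cf_den \<alpha> (Suc k)"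
        using d by simp_all
      then show False
        using q q_eq d by linarith
    next
      case 2
      then have "y * cf_den \<alpha> k \<le> 0" "z * cf_den \<alpha> (Suc k) \<le> 0"
        using d by (simp_all add: mult_nonpos_nonneg)
      then show False
        using q q_eq d by linarith
    qed
  qed
  ultimately show thesis
    using that p q_eq by blast
qed

lemma abs_err_coords:
  fixes p q y z :: int
  assumes "p = y * cf_num \<alpha> k + z * cf_num \<alpha> (Suc k)"
    and "q = y * cf_den \<alpha> k + z * cf_den \<alpha> (Suc k)" and "y * z \<le> 0"
  shows "\<bar>of_int q * \<alpha> - of_int p\<bar>
           = of_int \<bar>y\<bar> * \<bar>cf_err \<alpha> k\<bar> + of_int \<bar>z\<bar> * \<bar>cf_err \<alpha> (Suc k)\<bar>"
proof -
  have "0 \<le> of_int (y * z) * (cf_err \<alpha> k * cf_err \<alpha> (Suc k))"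
    using assms(3) cf_err_Suc_mult_nonpos[of k] by (intro mult_nonpos_nonpos) (simp_all flip: of_int_mult)
  then have "0 \<le> (of_int y * cf_err \<alpha> k) * (of_int z * cf_err \<alpha> (Suc k))"
    by (simp add: mult_ac)
  moreover have "\<bar>a + b\<bar> = \<bar>a\<bar> + \<bar>b\<bar>" if "0 \<le> a * b" for a b :: real
    using that by (auto simp: zero_le_mult_iff)
  moreover have "of_int q * \<alpha> - of_int p = of_int y * cf_err \<alpha> k + of_int z * cf_err \<alpha> (Suc k)"
    by (simp add: assms(1,2) cf_err_def algebra_simps)
  ultimately show ?thesis
    by (simp add: abs_mult)
qed

lemma cf_den_bracket:
  fixes q :: int
  assumes "1 \<le> q"
  obtains k where "1 \<le> k" "cf_den \<alpha> k \<le> q" "q < cf_den \<alpha> (Suc k)"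
proof -
  have ex: "q < cf_den \<alpha> (Suc (nat q + 1))"
    using cf_den_Suc_ge[of "nat q + 1"] assms by linarith
  define n where "n = (LEAST n. q < cf_den \<alpha> n)"
  have n: "q < cf_den \<alpha> n"
    unfolding n_def using ex by (rule LeastI)
  have "2 \<le> n"
  proof (rule ccontr)
    assume "\<not> 2 \<le> n"
    then have "n = 0 \<or> n = Suc 0"
      by linarith
    with n assms show False
      by auto
  qed
  then obtain k where k: "n = Suc k" "1 \<le> k"
    by (cases n) auto
  have "\<not> q < cf_den \<alpha> k"
    using k not_less_Least[of k "\<lambda>n. q < cf_den \<alpha> n"] by (simp add: n_def)
  then show thesis
    using that k n by simp
qed

theorem cf_best_approximation:
  fixes p q :: int
  assumes "1 \<le> q" "q < cf_den \<alpha> (Suc m)"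
  shows "\<bar>cf_err \<alpha> m\<bar> \<le> \<bar>of_int q * \<alpha> - of_int p\<bar>"
proof -
  obtain k where k: "1 \<le> k" "cf_den \<alpha> k \<le> q" "q < cf_den \<alpha> (Suc k)"
    using cf_den_bracket[OF assms(1)] .
  obtain y z where p: "p = y * cf_num \<alpha> k + z * cf_num \<alpha> (Suc k)"
    and q: "q = y * cf_den \<alpha> k + z * cf_den \<alpha> (Suc k)" and "y \<noteq> 0" "y * z \<le> 0"
    using cf_coords_between[OF k] .
  have "k \<le> m"
    using cf_den_mono[of "Suc m" k] k assms(2) by linarith
  have "\<bar>cf_err \<alpha> m\<bar> \<le> \<bar>cf_err \<alpha> k\<bar>"
    using \<open>k \<le> m\<close> by (rule abs_cf_err_antimono)
  also have "\<dots> \<le> of_int \<bar>y\<bar> * \<bar>cf_err \<alpha> k\<bar>"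
  proof -
    have "(1::real) \<le> of_int \<bar>y\<bar>"
      using \<open>y \<noteq> 0\<close> by linarith
    then show ?thesis
      using mult_right_mono[of 1 "of_int \<bar>y\<bar>" "\<bar>cf_err \<alpha> k\<bar>"] by simp
  qed
  also have "\<dots> \<le> \<bar>of_int q * \<alpha> - of_int p\<bar>"
    using abs_err_coords[OF p q \<open>y * z \<le> 0\<close>] by simp
  finally show ?thesis .
qed

lemma intermediate_fraction_bound:
  fixes j :: int
  assumes j: "1 \<le> j" "j < cf_a \<alpha> (Suc m)"
  defines "q \<equiv> j * cf_den \<alpha> (Suc m) + cf_den \<alpha> m"
    and "p \<equiv> j * cf_num \<alpha> (Suc m) + cf_num \<alpha> m"
  shows "cf_qerr \<alpha> (Suc m) + min (cf_qerr \<alpha> m) (cf_qerr \<alpha> (Suc (Suc m)))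
           \<le> of_int q * \<bar>of_int q * \<alpha> - of_int p\<bar>"
proof -
  define a where "a = cf_a \<alpha> (Suc m)"
  define \<rho> where "\<rho> = r (Suc m)"
  define A where "A = \<bar>cf_err \<alpha> m\<bar>"
  define D where "D = \<bar>cf_err \<alpha> (Suc m)\<bar>"
  define e where "e = \<bar>of_int q * \<alpha> - of_int p\<bar>"
  have \<rho>: "1 < \<rho>" "of_int a < \<rho>"
    using cf_rem_Suc_gt_1[of m] cf_a_less_cf_rem[of "Suc m"] by (simp_all add: \<rho>_def a_def)
  have D: "D = A / \<rho>"
    by (simp add: D_def A_def \<rho>_def abs_cf_err_Suc)
  have err1: "cf_err \<alpha> (Suc m) = - cf_err \<alpha> m / \<rho>"
    by (simp add: \<rho>_def cf_err_Suc)
  \<comment> \<open>both errors are cf_err m times a positive factor, since j < a < \<rho>\<close>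
  have "of_int q * \<alpha> - of_int p = of_int j * cf_err \<alpha> (Suc m) + cf_err \<alpha> m"
    by (simp add: q_def p_def cf_err_def algebra_simps)
  also have "\<dots> = cf_err \<alpha> m * (1 - of_int j / \<rho>)"
    by (simp add: err1 algebra_simps)
  finally have e1: "of_int q * \<alpha> - of_int p = cf_err \<alpha> m * (1 - of_int j / \<rho>)" .
  have e2: "cf_err \<alpha> (Suc (Suc m)) = cf_err \<alpha> m * (1 - of_int a / \<rho>)"
    by (simp add: cf_err_Suc_Suc err1 a_def algebra_simps)
  have "of_int j / \<rho> < 1" "of_int a / \<rho> < 1"
    using j \<rho> by (simp_all add: a_def divide_less_eq)
  then have "e = A * (1 - of_int j / \<rho>)"
    and "\<bar>cf_err \<alpha> (Suc (Suc m))\<bar> = A * (1 - of_int a / \<rho>)"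
    unfolding e_def e1 e2 by (simp_all add: abs_mult A_def)
  then have E: "e = A - of_int j * D"
    and E2: "\<bar>cf_err \<alpha> (Suc (Suc m))\<bar> = A - of_int a * D"
    by (simp_all add: D algebra_simps)
  have u0: "cf_qerr \<alpha> m = of_int (cf_den \<alpha> m) * A"
    and u1: "cf_qerr \<alpha> (Suc m) = of_int (cf_den \<alpha> (Suc m)) * D"
    and u2: "cf_qerr \<alpha> (Suc (Suc m))
               = (of_int a * of_int (cf_den \<alpha> (Suc m)) + of_int (cf_den \<alpha> m)) * (A - of_int a * D)"
    by (simp_all add: cf_qerr_def A_def D_def E2 cf_den_Suc_Suc a_def)
  \<comment> \<open>a q = (a - j) cf_den m + j cf_den (m + 2): q is a convex combination of its neighbours\<close>
  have ident: "of_int a * (of_int q * e)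
      = (of_int a - of_int j) * cf_qerr \<alpha> m + of_int j * cf_qerr \<alpha> (Suc (Suc m))
        + of_int a * cf_qerr \<alpha> (Suc m) * (of_int j * (of_int a - of_int j))"
    unfolding E u0 u1 u2 by (simp add: q_def algebra_simps)
  define \<mu> where "\<mu> = min (cf_qerr \<alpha> m) (cf_qerr \<alpha> (Suc (Suc m)))"
  have "1 \<le> j * (a - j)"
    using j mult_mono[of 1 j 1 "a - j"] by (simp add: a_def)
  then have "(1::real) \<le> of_int j * (of_int a - of_int j)"
    by (metis of_int_1_le_iff of_int_diff of_int_mult)
  then have "of_int a * cf_qerr \<alpha> (Suc m) \<le> of_int a * cf_qerr \<alpha> (Suc m) * (of_int j * (of_int a - of_int j))"
    using j cf_qerr_nonneg[of "Suc m"]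
      mult_left_mono[of 1 _ "of_int a * cf_qerr \<alpha> (Suc m)"] by (simp add: a_def)
  moreover have "(of_int a - of_int j) * \<mu> \<le> (of_int a - of_int j) * cf_qerr \<alpha> m"
    and "of_int j * \<mu> \<le> of_int j * cf_qerr \<alpha> (Suc (Suc m))"
    using j by (simp_all add: \<mu>_def a_def mult_left_mono)
  ultimately have "of_int a * (cf_qerr \<alpha> (Suc m) + \<mu>) \<le> of_int a * (of_int q * e)"
    unfolding ident by (simp add: algebra_simps)
  then show ?thesis
    using j by (simp add: \<mu>_def a_def e_def)
qed

lemma cf_den_mult_err_ge_1:
  fixes p q y z :: int
  assumes coords: "p = y * cf_num \<alpha> k + z * cf_num \<alpha> (Suc k)"
      "q = y * cf_den \<alpha> k + z * cf_den \<alpha> (Suc k)" "y * z \<le> 0"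
    and "z \<noteq> 0" and "cf_den \<alpha> (Suc k) \<le> \<bar>y\<bar> * cf_den \<alpha> k"
  shows "1 \<le> of_int (cf_den \<alpha> k) * \<bar>of_int q * \<alpha> - of_int p\<bar>"
proof -
  have "of_int (cf_den \<alpha> (Suc k)) * \<bar>cf_err \<alpha> k\<bar> \<le> of_int (\<bar>y\<bar> * cf_den \<alpha> k) * \<bar>cf_err \<alpha> k\<bar>"
    using assms(5) by (intro mult_right_mono) (simp_all only: of_int_le_iff abs_ge_zero)
  moreover have "of_int (cf_den \<alpha> k) * \<bar>cf_err \<alpha> (Suc k)\<bar>
                   \<le> of_int (cf_den \<alpha> k) * (of_int \<bar>z\<bar> * \<bar>cf_err \<alpha> (Suc k)\<bar>)"
  proof -
    have "(1::real) \<le> of_int \<bar>z\<bar>"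
      using \<open>z \<noteq> 0\<close> by linarith
    then show ?thesis
      using cf_den_nonneg[of k] mult_right_mono[of 1 "of_int \<bar>z\<bar>" "\<bar>cf_err \<alpha> (Suc k)\<bar>"]
      by (intro mult_left_mono) simp_all
  qed
  ultimately show ?thesis
    using cf_den_err_identity[of k] abs_err_coords[OF coords] by (simp add: algebra_simps)
qed

lemma cf_coords_intermediate:
  fixes p q y z :: int
  assumes coords: "p = y * cf_num \<alpha> (Suc m) + z * cf_num \<alpha> (Suc (Suc m))"
      "q = y * cf_den \<alpha> (Suc m) + z * cf_den \<alpha> (Suc (Suc m))" "y * z \<le> 0"
    and "y \<noteq> 0" "z \<noteq> 0" and "\<bar>y\<bar> * cf_den \<alpha> (Suc m) < cf_den \<alpha> (Suc (Suc m))"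
    and q: "1 \<le> q" "q < cf_den \<alpha> (Suc (Suc m))"
  obtains j where "0 \<le> j" "j < cf_a \<alpha> (Suc m)"
    and "p = j * cf_num \<alpha> (Suc m) + cf_num \<alpha> m" and "q = j * cf_den \<alpha> (Suc m) + cf_den \<alpha> m"
proof -
  have d: "cf_den \<alpha> m \<le> cf_den \<alpha> (Suc m)"
    by (rule cf_den_le_Suc)
  have "0 < z"
  proof (rule ccontr)
    assume "\<not> 0 < z"
    then have "z * cf_den \<alpha> (Suc (Suc m)) \<le> - 1 * cf_den \<alpha> (Suc (Suc m))"
      using \<open>z \<noteq> 0\<close> cf_den_nonneg[of "Suc (Suc m)"] by (intro mult_right_mono) auto
    moreover have "y * cf_den \<alpha> (Suc m) \<le> \<bar>y\<bar> * cf_den \<alpha> (Suc m)"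
      using cf_den_nonneg[of "Suc m"] by (simp add: mult_right_mono)
    ultimately show False
      using assms(6) q coords(2) by linarith
  qed
  then have "y < 0"
    using coords(3) \<open>y \<noteq> 0\<close> by (auto simp: mult_le_0_iff)
  have "z = 1"
  proof (rule ccontr)
    assume "z \<noteq> 1"
    then have "2 * cf_den \<alpha> (Suc (Suc m)) \<le> z * cf_den \<alpha> (Suc (Suc m))"
      using \<open>0 < z\<close> cf_den_nonneg[of "Suc (Suc m)"] by (intro mult_right_mono) auto
    then show False
      using assms(6) q coords(2) \<open>y < 0\<close> by linarith
  qed
  define j where "j = cf_a \<alpha> (Suc m) + y"
  have p: "p = j * cf_num \<alpha> (Suc m) + cf_num \<alpha> m" and q': "q = j * cf_den \<alpha> (Suc m) + cf_den \<alpha> m"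
    using coords \<open>z = 1\<close> by (simp_all add: j_def cf_num_Suc_Suc cf_den_Suc_Suc algebra_simps)
  have "0 \<le> j"
  proof (rule ccontr)
    assume "\<not> 0 \<le> j"
    then have "j * cf_den \<alpha> (Suc m) \<le> - 1 * cf_den \<alpha> (Suc m)"
      using cf_den_nonneg[of "Suc m"] by (intro mult_right_mono) auto
    then show False
      using q q' d by linarith
  qed
  moreover have "j < cf_a \<alpha> (Suc m)"
    using \<open>y < 0\<close> by (simp add: j_def)
  ultimately show thesis
    using that p q' by blast
qed

theorem cf_non_convergent_bound:
  fixes p q :: int
  assumes q: "cf_den \<alpha> (Suc m) \<le> q" "q < cf_den \<alpha> (Suc (Suc m))"
    and ne: "(p, q) \<noteq> (cf_num \<alpha> m, cf_den \<alpha> m)" "(p, q) \<noteq> (cf_num \<alpha> (Suc m), cf_den \<alpha> (Suc m))"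
  shows "min 1 (2 * min (cf_qerr \<alpha> m) (min (cf_qerr \<alpha> (Suc m)) (cf_qerr \<alpha> (Suc (Suc m)))))
           \<le> of_int q * \<bar>of_int q * \<alpha> - of_int p\<bar>"
    (is "min 1 (2 * ?\<mu>) \<le> _")
proof -
  define e where "e = \<bar>of_int q * \<alpha> - of_int p\<bar>"
  have d: "1 \<le> cf_den \<alpha> (Suc m)"
    by (rule cf_den_Suc_ge_1)
  then have q1: "1 \<le> q"
    using q by linarith
  obtain y z where coords: "p = y * cf_num \<alpha> (Suc m) + z * cf_num \<alpha> (Suc (Suc m))"
      "q = y * cf_den \<alpha> (Suc m) + z * cf_den \<alpha> (Suc (Suc m))" "y * z \<le> 0" and "y \<noteq> 0"
    by (rule cf_coords_between[OF _ q]) auto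
  consider "z = 0"
    | "z \<noteq> 0" "cf_den \<alpha> (Suc (Suc m)) \<le> \<bar>y\<bar> * cf_den \<alpha> (Suc m)"
    | "z \<noteq> 0" "\<bar>y\<bar> * cf_den \<alpha> (Suc m) < cf_den \<alpha> (Suc (Suc m))"
    by linarith
  then have "min 1 (2 * ?\<mu>) \<le> of_int q * e"
  proof cases
    case 1
    then have "0 < y"
      using coords(2) q1 d 1 mult_nonpos_nonneg[of y "cf_den \<alpha> (Suc m)"] by fastforce
    moreover have "y \<noteq> 1"
      using ne(2) coords 1 by auto
    ultimately have "2 \<le> real_of_int y * of_int y"
      using mult_mono[of 1 "real_of_int y" 2 "of_int y"] by simp
    then have "2 * cf_qerr \<alpha> (Suc m) \<le> of_int y * of_int y * cf_qerr \<alpha> (Suc m)"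
      using cf_qerr_nonneg by (intro mult_right_mono) auto
    also have "\<dots> = of_int q * e"
      using abs_err_coords[OF coords] 1 \<open>0 < y\<close> by (simp add: e_def cf_qerr_def coords(2))
    finally show ?thesis
      by linarith
  next
    case 2
    have "1 \<le> of_int (cf_den \<alpha> (Suc m)) * e"
      using cf_den_mult_err_ge_1[OF coords 2] by (simp add: e_def)
    also have "\<dots> \<le> of_int q * e"
      using q by (intro mult_right_mono) (simp_all add: e_def)
    finally show ?thesis
      by linarith
  next
    case 3
    obtain j where j: "0 \<le> j" "j < cf_a \<alpha> (Suc m)"
      and pq: "p = j * cf_num \<alpha> (Suc m) + cf_num \<alpha> m" "q = j * cf_den \<alpha> (Suc m) + cf_den \<alpha> m"
      using cf_coords_intermediate[OF coords \<open>y \<noteq> 0\<close> 3 q1 q(2)] .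
    have "j \<noteq> 0"
      using ne(1) pq by auto
    then have "cf_qerr \<alpha> (Suc m) + min (cf_qerr \<alpha> m) (cf_qerr \<alpha> (Suc (Suc m))) \<le> of_int q * e"
      using intermediate_fraction_bound[of j m] j pq by (simp add: e_def)
    then show ?thesis
      by linarith
  qed
  then show ?thesis
    by (simp add: e_def)
qed

lemma not_convergent_if_better_neighbour:
  fixes p q p' q' :: int
  assumes q': "1 \<le> q'" "q' < q"
    and better: "\<bar>of_int q' * \<alpha> - of_int p'\<bar> < \<bar>of_int q * \<alpha> - of_int p\<bar>"
    and unimodular: "\<bar>p * q' - q * p'\<bar> = 1"
  shows "real_of_int p / of_int q \<noteq> of_int (cf_p \<alpha> n) / of_int (cf_q \<alpha> n)"
proof
  assume eq: "real_of_int p / of_int q = of_int (cf_p \<alpha> n) / of_int (cf_q \<alpha> n)"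
  define P where "P = cf_num \<alpha> (Suc n)"
  define Q where "Q = cf_den \<alpha> (Suc n)"
  have Q: "1 \<le> Q" "0 < q"
    using cf_den_Suc_ge_1[of n] q' by (simp_all add: Q_def)
  then have "real_of_int (p * Q) = of_int (P * q)"
    using eq by (simp add: P_def Q_def cf_p_eq_num cf_q_eq_den field_simps)
  then have cross: "p * Q = P * q"
    by (simp only: of_int_eq_iff)
  have "coprime q p"
  proof (rule coprimeI)
    fix d assume "d dvd q" "d dvd p"
    then have "d dvd \<bar>p * q' - q * p'\<bar>"
      by simp
    then show "is_unit d"
      by (simp add: unimodular)
  qed
  moreover have "q dvd p * Q"
    by (simp add: cross)
  ultimately obtain g where g: "Q = q * g"
    using coprime_dvd_mult_right_iff by blast
  have "0 < g"
    using Q g by (smt (verit) mult_nonpos_nonneg mult_nonneg_nonpos)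
  have "P = p * g"
    using cross g Q by (simp add: mult.left_commute)
  then have "cf_err \<alpha> (Suc n) = of_int g * (of_int q * \<alpha> - of_int p)"
    by (simp add: cf_err_def flip: P_def Q_def) (simp add: g algebra_simps)
  then have "\<bar>cf_err \<alpha> (Suc n)\<bar> = of_int g * \<bar>of_int q * \<alpha> - of_int p\<bar>"
    using \<open>0 < g\<close> by (simp add: abs_mult)
  also have "\<dots> \<ge> \<bar>of_int q * \<alpha> - of_int p\<bar>"
    using \<open>0 < g\<close> mult_right_mono[of 1 "of_int g" "\<bar>of_int q * \<alpha> - of_int p\<bar>"] by simp
  finally have "\<bar>of_int q' * \<alpha> - of_int p'\<bar> < \<bar>cf_err \<alpha> (Suc n)\<bar>"
    using better by linarith
  moreover have "q * 1 \<le> q * g"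
    using \<open>0 < g\<close> Q by (intro mult_left_mono) auto
  then have "q' < cf_den \<alpha> (Suc n)"
    using q' g unfolding Q_def by linarith
  then have "\<bar>cf_err \<alpha> n\<bar> \<le> \<bar>of_int q' * \<alpha> - of_int p'\<bar>"
    using q'(1) by (rule cf_best_approximation[rotated])
  ultimately show False
    using abs_cf_err_Suc_less[of n] by linarith
qed

end

section \<open>Approximation functions over a class of pairs\<close>

definition psi_rel :: "real \<Rightarrow> (int \<Rightarrow> int \<Rightarrow> bool) \<Rightarrow> real \<Rightarrow> real" where
  "psi_rel \<alpha> R t = Inf {\<bar>of_int q * \<alpha> - of_int p\<bar> | p q::int. R p q \<and> 1 \<le> q \<and> real_of_int q \<le> t}"

lemma dist_int_le: "dist_int x \<le> \<bar>x - of_int m\<bar>"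
proof (cases "m = round x")
  case False
  then have "1 \<le> \<bar>m - round x\<bar>"
    by linarith
  then have "1 \<le> \<bar>of_int m - of_int (round x) :: real\<bar>"
    by (metis of_int_1_le_iff of_int_abs of_int_diff)
  moreover have "\<bar>x - of_int (round x)\<bar> \<le> 1/2"
    using of_int_round_abs_le[of x] by (simp add: abs_minus_commute)
  ultimately show ?thesis
    unfolding dist_int_def by linarith
qed (simp add: dist_int_def)

lemma psi_eq_psi_rel: "psi \<alpha> t = psi_rel \<alpha> (\<lambda>_ _. True) t"
proof (cases "1 \<le> t")
  case True
  define A where "A = {dist_int (of_int q * \<alpha>) | q::int. 1 \<le> q \<and> real_of_int q \<le> t}"
  define B where "B = {\<bar>of_int q * \<alpha> - of_int p\<bar> | p q::int. 1 \<le> q \<and> real_of_int q \<le> t}"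
  have sub: "A \<subseteq> B"
    by (auto simp: A_def B_def dist_int_def)
  have ne: "A \<noteq> {}"
    using True by (auto simp: A_def)
  have bdd: "bdd_below B"
    by (auto simp: B_def intro!: bdd_belowI[of _ 0])
  have "Inf B \<le> Inf A"
    by (rule cInf_superset_mono[OF ne bdd sub])
  moreover have "Inf A \<le> Inf B"
  proof (rule cInf_greatest)
    show "B \<noteq> {}"
      using sub ne by blast
    fix b assume "b \<in> B"
    then obtain p q :: int where b: "b = \<bar>of_int q * \<alpha> - of_int p\<bar>" "1 \<le> q" "real_of_int q \<le> t"
      by (auto simp: B_def)
    have "Inf A \<le> dist_int (of_int q * \<alpha>)"
      using b by (intro cInf_lower) (auto simp: A_def dist_int_def intro!: bdd_belowI[of _ 0])
    then show "Inf A \<le> b"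
      using dist_int_le[of "of_int q * \<alpha>" p] b(1) by linarith
  qed
  ultimately show ?thesis
    by (simp add: psi_def psi_rel_def A_def B_def)
next
  case False
  then have "\<And>q::int. 1 \<le> q \<Longrightarrow> \<not> real_of_int q \<le> t"
    by (metis of_int_1_le_iff order.trans)
  then have "{dist_int (of_int q * \<alpha>) | q::int. 1 \<le> q \<and> real_of_int q \<le> t} = {}"
    "{\<bar>of_int q * \<alpha> - of_int p\<bar> | p q::int. True \<and> 1 \<le> q \<and> real_of_int q \<le> t} = {}"
    by auto
  then show ?thesis
    unfolding psi_def psi_rel_def by (simp only:)
qed

definition non_convergent_pair :: "real \<Rightarrow> int \<Rightarrow> int \<Rightarrow> bool" where
  "non_convergent_pair \<alpha> p q \<longleftrightarrow> (\<forall>n. (p, q) \<noteq> (cf_p \<alpha> n, cf_q \<alpha> n))"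

definition non_convergent_ratio :: "real \<Rightarrow> int \<Rightarrow> int \<Rightarrow> bool" where
  "non_convergent_ratio \<alpha> p q \<longleftrightarrow>
     (\<forall>n. real_of_int p / of_int q \<noteq> of_int (cf_p \<alpha> n) / of_int (cf_q \<alpha> n))"

lemma non_convergent_ratio_imp_pair: "non_convergent_ratio \<alpha> p q \<Longrightarrow> non_convergent_pair \<alpha> p q"
  unfolding non_convergent_ratio_def non_convergent_pair_def by auto

lemma psi2_eq_psi_rel: "psi2 \<alpha> t = psi_rel \<alpha> (non_convergent_pair \<alpha>) t"
  unfolding psi2_def psi_rel_def non_convergent_pair_def by (simp only: conj_ac)

lemma psi2star_eq_psi_rel: "psi2star \<alpha> t = psi_rel \<alpha> (non_convergent_ratio \<alpha>) t"
  unfolding psi2star_def psi_rel_def non_convergent_ratio_def by (simp only: conj_ac)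

lemma psi_rel_le:
  "R p q \<Longrightarrow> 1 \<le> q \<Longrightarrow> real_of_int q \<le> t \<Longrightarrow> psi_rel \<alpha> R t \<le> \<bar>of_int q * \<alpha> - of_int p\<bar>"
  unfolding psi_rel_def by (rule cInf_lower) (auto intro!: bdd_belowI[of _ 0])

lemma psi_rel_mono:
  assumes "\<And>p q. R' p q \<Longrightarrow> R p q" and "R' p\<^sub>0 1" and "1 \<le> t"
  shows "psi_rel \<alpha> R t \<le> psi_rel \<alpha> R' t"
  unfolding psi_rel_def
  using assms by (intro cInf_superset_mono) (fastforce intro!: bdd_belowI[of _ 0])+

lemma Liminf_psi_rel_mono:
  assumes "\<And>p q. R' p q \<Longrightarrow> R p q" and "R' p\<^sub>0 1"
  shows "Liminf at_top (\<lambda>t. ereal (t * psi_rel \<alpha> R t)) \<le> Liminf at_top (\<lambda>t. ereal (t * psi_rel \<alpha> R' t))"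
proof (rule Liminf_mono)
  have "ereal (t * psi_rel \<alpha> R t) \<le> ereal (t * psi_rel \<alpha> R' t)" if "1 \<le> t" for t
    using psi_rel_mono[of R' R p\<^sub>0 t \<alpha>] assms that by (simp add: mult_left_mono)
  then show "\<forall>\<^sub>F t in at_top. ereal (t * psi_rel \<alpha> R t) \<le> ereal (t * psi_rel \<alpha> R' t)"
    unfolding eventually_at_top_linorder by blast
qed

text \<open>A lower bound on the liminf only needs control of the pairs with small error: the
  remaining ones have error at least \<epsilon>, and t \<epsilon> is eventually large.\<close>
lemma Liminf_psi_rel_ge:
  assumes "R p\<^sub>0 1"
    and bound: "\<And>z. ereal z < L \<Longrightarrow> \<exists>\<epsilon>>0. \<forall>p q. R p q \<longrightarrow> 1 \<le> q \<longrightarrow>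
                  \<epsilon> \<le> \<bar>of_int q * \<alpha> - of_int p\<bar> \<or> z \<le> of_int q * \<bar>of_int q * \<alpha> - of_int p\<bar>"
  shows "L \<le> Liminf at_top (\<lambda>t. ereal (t * psi_rel \<alpha> R t))"
  unfolding le_Liminf_iff
proof (intro allI impI)
  fix y assume "y < L"
  then obtain z where z: "y < ereal z" "ereal z < L"
    using ereal_dense2 by blast
  then obtain \<epsilon> where \<epsilon>: "0 < \<epsilon>" and alt: "\<And>p q. R p q \<Longrightarrow> 1 \<le> q \<Longrightarrow>
      \<epsilon> \<le> \<bar>of_int q * \<alpha> - of_int p\<bar> \<or> z \<le> of_int q * \<bar>of_int q * \<alpha> - of_int p\<bar>"
    using bound by blast
  define T where "T = max 1 (\<bar>z\<bar> / \<epsilon>)"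
  have "z \<le> t * psi_rel \<alpha> R t" if t: "T \<le> t" for t
  proof -
    have t1: "1 \<le> t" and tz: "\<bar>z\<bar> \<le> t * \<epsilon>"
      using t \<epsilon> by (auto simp: T_def divide_le_eq)
    have "z / t \<le> psi_rel \<alpha> R t"
      unfolding psi_rel_def
    proof (rule cInf_greatest)
      show "{\<bar>of_int q * \<alpha> - of_int p\<bar> | p q::int. R p q \<and> 1 \<le> q \<and> real_of_int q \<le> t} \<noteq> {}"
        using assms(1) t1 by fastforce
      fix e assume "e \<in> {\<bar>of_int q * \<alpha> - of_int p\<bar> | p q::int. R p q \<and> 1 \<le> q \<and> real_of_int q \<le> t}"
      then obtain p q :: int where e: "e = \<bar>of_int q * \<alpha> - of_int p\<bar>" and pq: "R p q" "1 \<le> q" "real_of_int q \<le> t"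
        by blast
      have "z \<le> t * e"
        using alt[OF pq(1,2)]
      proof
        assume "\<epsilon> \<le> \<bar>of_int q * \<alpha> - of_int p\<bar>"
        then show ?thesis
          using tz t1 e mult_left_mono[of \<epsilon> e t] by linarith
      next
        assume "z \<le> of_int q * \<bar>of_int q * \<alpha> - of_int p\<bar>"
        then show ?thesis
          using pq(3) e mult_right_mono[of "of_int q" t e] by simp
      qed
      then show "z / t \<le> e"
        using t1 by (simp add: divide_le_eq mult.commute)
    qed
    then show ?thesis
      using t1 by (simp add: divide_le_eq mult.commute)
  qed
  then show "\<forall>\<^sub>F t in at_top. y < ereal (t * psi_rel \<alpha> R t)"
    unfolding eventually_at_top_linorder using z(1) by (meson ereal_less_eq(3) less_le_trans)
qed

lemma Liminf_psi_rel_le: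
  assumes "\<And>T. \<exists>p q. R p q \<and> 1 \<le> q \<and> T \<le> real_of_int q \<and> of_int q * \<bar>of_int q * \<alpha> - of_int p\<bar> \<le> w"
  shows "Liminf at_top (\<lambda>t. ereal (t * psi_rel \<alpha> R t)) \<le> ereal w"
proof (rule Liminf_least)
  fix P assume "eventually P (at_top :: real filter)"
  then obtain T where T: "\<And>t. T \<le> t \<Longrightarrow> P t"
    by (auto simp: eventually_at_top_linorder)
  obtain p q where pq: "R p q" "1 \<le> q" "T \<le> real_of_int q"
    and w: "of_int q * \<bar>of_int q * \<alpha> - of_int p\<bar> \<le> w"
    using assms by blast
  have "of_int q * psi_rel \<alpha> R (of_int q) \<le> of_int q * \<bar>of_int q * \<alpha> - of_int p\<bar>"
    using psi_rel_le[of R p q "of_int q" \<alpha>] pq by (intro mult_left_mono) auto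
  then have "of_int q * psi_rel \<alpha> R (of_int q) \<le> w"
    using w by linarith
  then show "(INF t\<in>Collect P. ereal (t * psi_rel \<alpha> R t)) \<le> ereal w"
    using T[OF pq(3)] by (intro INF_lower2) auto
qed

lemma less_Liminf_psi_rel:
  assumes "ereal c < Liminf at_top (\<lambda>t. ereal (t * psi_rel \<alpha> R t))"
  obtains T where "\<And>p q. R p q \<Longrightarrow> 1 \<le> q \<Longrightarrow> T \<le> real_of_int q \<Longrightarrow> c < of_int q * \<bar>of_int q * \<alpha> - of_int p\<bar>"
proof -
  obtain T where T: "\<And>t. T \<le> t \<Longrightarrow> c < t * psi_rel \<alpha> R t"
    using less_LiminfD[OF assms] by (auto simp: eventually_at_top_linorder)
  show thesis
  proof (rule that)
    fix p q assume pq: "R p q" "1 \<le> q" "T \<le> real_of_int q"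
    have "of_int q * psi_rel \<alpha> R (of_int q) \<le> of_int q * \<bar>of_int q * \<alpha> - of_int p\<bar>"
      using psi_rel_le[of R p q "of_int q" \<alpha>] pq pq(2) by (intro mult_left_mono) auto
    then show "c < of_int q * \<bar>of_int q * \<alpha> - of_int p\<bar>"
      using T[OF pq(3)] by linarith
  qed
qed

lemma lagrange_eq_Liminf_psi_rel:
  "lagrange \<alpha> = Liminf at_top (\<lambda>t. ereal (t * psi_rel \<alpha> (\<lambda>_ _. True) t))"
  by (simp add: lagrange_def psi_eq_psi_rel)

lemma kfrak_eq_Liminf_psi_rel:
  "kfrak \<alpha> = Liminf at_top (\<lambda>t. ereal (t * psi_rel \<alpha> (non_convergent_pair \<alpha>) t))"
  by (simp add: kfrak_def psi2_eq_psi_rel)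

lemma kfrak_star_eq_Liminf_psi_rel:
  "kfrak_star \<alpha> = Liminf at_top (\<lambda>t. ereal (t * psi_rel \<alpha> (non_convergent_ratio \<alpha>) t))"
  by (simp add: kfrak_star_def psi2star_eq_psi_rel)

lemma lagrange_nonneg: "0 \<le> lagrange \<alpha>"
  unfolding lagrange_eq_Liminf_psi_rel
proof (rule Liminf_psi_rel_ge[of _ 0])
  fix z :: real assume "ereal z < 0"
  then have "z < 0"
    by simp
  have "z \<le> of_int q * \<bar>of_int q * \<alpha> - of_int p\<bar>" if "1 \<le> q" for p q :: int
  proof -
    have "0 \<le> of_int q * \<bar>of_int q * \<alpha> - of_int p\<bar>"
      using that by simp
    with \<open>z < 0\<close> show ?thesis
      by linarith
  qed
  then show "\<exists>\<epsilon>>0. \<forall>p q. True \<longrightarrow> 1 \<le> q \<longrightarrow>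
      \<epsilon> \<le> \<bar>of_int q * \<alpha> - of_int p\<bar> \<or> z \<le> of_int q * \<bar>of_int q * \<alpha> - of_int p\<bar>"
    by (intro exI[of _ 1]) auto
qed simp

context irrational_cf
begin

lemma abs_cf_err_le_1: "\<bar>cf_err \<alpha> k\<bar> \<le> 1"
  using abs_cf_err_antimono[of 0 k] by simp

lemma non_convergent_ratio_witness: "non_convergent_ratio \<alpha> (\<lfloor>\<alpha>\<rfloor> + 3) 1"
  unfolding non_convergent_ratio_def
proof (intro allI notI)
  fix n
  assume "real_of_int (\<lfloor>\<alpha>\<rfloor> + 3) / of_int 1 = of_int (cf_p \<alpha> n) / of_int (cf_q \<alpha> n)"
  then have "cf_err \<alpha> (Suc n) = of_int (cf_den \<alpha> (Suc n)) * (\<alpha> - of_int (\<lfloor>\<alpha>\<rfloor> + 3))"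
    using cf_den_Suc_ge_1[of n] by (simp add: cf_err_def cf_p_eq_num cf_q_eq_den field_simps)
  also have "\<dots> \<le> of_int (cf_den \<alpha> (Suc n)) * (-2)"
    using of_int_floor_le[of \<alpha>] real_of_int_floor_add_one_gt[of \<alpha>] cf_den_Suc_ge_1[of n]
    by (intro mult_left_mono) linarith+
  also have "\<dots> \<le> -2"
    using cf_den_Suc_ge_1[of n] by simp
  finally show False
    using abs_cf_err_le_1[of "Suc n"] by linarith
qed

lemma non_convergent_pair_neq:
  "non_convergent_pair \<alpha> p q \<Longrightarrow> 1 \<le> q \<Longrightarrow> (p, q) \<noteq> (cf_num \<alpha> k, cf_den \<alpha> k)"
  by (cases k) (auto simp: non_convergent_pair_def cf_p_eq_num cf_q_eq_den)

theorem kfrak_le_kfrak_star: "kfrak \<alpha> \<le> kfrak_star \<alpha>"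
  unfolding kfrak_eq_Liminf_psi_rel kfrak_star_eq_Liminf_psi_rel
  using non_convergent_ratio_imp_pair non_convergent_ratio_witness by (rule Liminf_psi_rel_mono)

lemma lagrange_le_half: "lagrange \<alpha> \<le> ereal (1/2)"
  unfolding lagrange_eq_Liminf_psi_rel
proof (rule Liminf_psi_rel_le)
  fix T
  obtain K where K: "\<And>k. K \<le> k \<Longrightarrow> max T 1 \<le> real_of_int (cf_den \<alpha> k)"
    using eventually_cf_den_ge by blast
  obtain k where k: "K \<le> k" "cf_qerr \<alpha> k \<le> 1/2"
  proof (cases "cf_qerr \<alpha> K \<le> 1/2")
    case False
    then show thesis
      using that[of "Suc K"] cf_qerr_Suc_add_le[of K] by simp
  qed (use that[of K] in simp)
  show "\<exists>p q. True \<and> 1 \<le> q \<and> T \<le> real_of_int q \<and> of_int q * \<bar>of_int q * \<alpha> - of_int p\<bar> \<le> 1/2"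
    using K[OF k(1)] k(2) by (intro exI[of _ "cf_num \<alpha> k"] exI[of _ "cf_den \<alpha> k"])
      (auto simp: cf_qerr_def cf_err_def)
qed

lemma eventually_cf_qerr_gt:
  assumes "ereal c < lagrange \<alpha>"
  obtains K where "\<And>k. K \<le> k \<Longrightarrow> c < cf_qerr \<alpha> k"
proof -
  obtain T where T: "\<And>p q. True \<Longrightarrow> 1 \<le> q \<Longrightarrow> T \<le> real_of_int q \<Longrightarrow>
      c < of_int q * \<bar>of_int q * \<alpha> - of_int p\<bar>"
    by (rule less_Liminf_psi_rel[OF assms[unfolded lagrange_eq_Liminf_psi_rel]]) blast
  obtain K where K: "\<And>k. K \<le> k \<Longrightarrow> max T 1 \<le> real_of_int (cf_den \<alpha> k)"
    using eventually_cf_den_ge by blast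
  show thesis
  proof (rule that)
    fix k assume "K \<le> k"
    then have "1 \<le> cf_den \<alpha> k" "T \<le> real_of_int (cf_den \<alpha> k)"
      using K[of k] by auto
    then show "c < cf_qerr \<alpha> k"
      using T[OF TrueI, of "cf_den \<alpha> k" "cf_num \<alpha> k"] by (simp add: cf_qerr_def cf_err_def)
  qed
qed

theorem kfrak_ge_twice_lagrange: "2 * lagrange \<alpha> \<le> kfrak \<alpha>"
  unfolding kfrak_eq_Liminf_psi_rel
proof (rule Liminf_psi_rel_ge)
  show "non_convergent_pair \<alpha> (\<lfloor>\<alpha>\<rfloor> + 3) 1"
    by (rule non_convergent_ratio_imp_pair[OF non_convergent_ratio_witness])
  fix z assume z: "ereal z < 2 * lagrange \<alpha>"
  then have "z < 1" and c: "ereal (z / 2) < lagrange \<alpha>"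
    using lagrange_le_half lagrange_nonneg
    by (cases "lagrange \<alpha>"; simp)+
  obtain K where K: "\<And>k. K \<le> k \<Longrightarrow> z / 2 < cf_qerr \<alpha> k"
    using eventually_cf_qerr_gt[OF c] by blast
  \<comment> \<open>small denominators are handled by best approximation, large ones by the bound between convergents\<close>
  have "\<bar>cf_err \<alpha> K\<bar> \<le> \<bar>of_int q * \<alpha> - of_int p\<bar> \<or> z \<le> of_int q * \<bar>of_int q * \<alpha> - of_int p\<bar>"
    if pq: "non_convergent_pair \<alpha> p q" "1 \<le> q" for p q
  proof (cases "q < cf_den \<alpha> (Suc K)")
    case True
    then show ?thesis
      using cf_best_approximation pq(2) by blast
  next
    case False
    obtain k where k: "1 \<le> k" "cf_den \<alpha> k \<le> q" "q < cf_den \<alpha> (Suc k)"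
      using cf_den_bracket[OF pq(2)] .
    then obtain m where m: "k = Suc m"
      by (cases k) auto
    have "K \<le> m"
    proof (rule ccontr)
      assume "\<not> K \<le> m"
      then have "cf_den \<alpha> (Suc k) \<le> cf_den \<alpha> (Suc K)"
        using m by (intro cf_den_mono) simp
      then show False
        using False k(3) by linarith
    qed
    then have "z < min 1 (2 * min (cf_qerr \<alpha> m) (min (cf_qerr \<alpha> (Suc m)) (cf_qerr \<alpha> (Suc (Suc m)))))"
      using K[of m] K[of "Suc m"] K[of "Suc (Suc m)"] \<open>z < 1\<close> by simp
    also have "\<dots> \<le> of_int q * \<bar>of_int q * \<alpha> - of_int p\<bar>"
      using k m non_convergent_pair_neq[OF pq] by (intro cf_non_convergent_bound) auto
    finally show ?thesis
      by simp
  qed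
  then show "\<exists>\<epsilon>>0. \<forall>p q. non_convergent_pair \<alpha> p q \<longrightarrow> 1 \<le> q \<longrightarrow>
      \<epsilon> \<le> \<bar>of_int q * \<alpha> - of_int p\<bar> \<or> z \<le> of_int q * \<bar>of_int q * \<alpha> - of_int p\<bar>"
    using abs_cf_err_pos[of K] by blast
qed

end

section \<open>Pell approximations of sqrt 2\<close>

lemma nat_sq_eq_twice_sq: "(p::nat)^2 = 2 * q^2 \<Longrightarrow> q = 0"
proof (induction q arbitrary: p rule: less_induct)
  case (less q)
  then have "even (p^2)"
    by simp
  then have "even p"
    by simp
  then obtain p' where p': "p = 2 * p'" ..
  with less.prems have "q^2 = 2 * p'^2"
    by (simp add: power_mult_distrib)
  then have "even (q^2)"
    by simp
  then have "even q"
    by simp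
  then obtain q' where q': "q = 2 * q'" ..
  with \<open>q^2 = 2 * p'^2\<close> have "p'^2 = 2 * q'^2"
    by (simp add: power_mult_distrib)
  show "q = 0"
  proof (rule ccontr)
    assume "q \<noteq> 0"
    then have "q' < q"
      using q' by simp
    with less.IH \<open>p'^2 = 2 * q'^2\<close> have "q' = 0"
      by blast
    with q' \<open>q \<noteq> 0\<close> show False
      by simp
  qed
qed

lemma int_sq_eq_twice_sq: "(p::int)^2 = 2 * q^2 \<Longrightarrow> q = 0"
proof -
  assume "p^2 = 2 * q^2"
  then have "int ((nat \<bar>p\<bar>)^2) = int (2 * (nat \<bar>q\<bar>)^2)"
    by simp
  then have "(nat \<bar>p\<bar>)^2 = 2 * (nat \<bar>q\<bar>)^2"
    by (simp only: of_nat_eq_iff)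
  then show "q = 0"
    using nat_sq_eq_twice_sq[of "nat \<bar>p\<bar>" "nat \<bar>q\<bar>"] by simp
qed

lemma sqrt2_lin_indep: "of_int q * sqrt 2 = of_int p \<Longrightarrow> p = 0 \<and> q = 0"
proof -
  assume h: "of_int q * sqrt 2 = of_int p"
  then have "(of_int q * sqrt 2)^2 = (of_int p :: real)^2"
    by simp
  then have "real_of_int (p^2) = real_of_int (2 * q^2)"
    by (simp add: power_mult_distrib)
  then have "q = 0"
    using int_sq_eq_twice_sq by (simp only: of_int_eq_iff)
  with h show ?thesis
    by simp
qed

fun pell_num :: "nat \<Rightarrow> int" and pell_den :: "nat \<Rightarrow> int" where
  "pell_num 0 = 1"
| "pell_num (Suc n) = pell_num n + 2 * pell_den n"
| "pell_den 0 = 0"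
| "pell_den (Suc n) = pell_num n + pell_den n"

lemma pell_num_pos: "1 \<le> pell_num n" and pell_den_ge: "int n \<le> pell_den n"
  by (induction n) auto

lemma pell_den_sqrt2_add: "of_int (pell_num n) + of_int (pell_den n) * sqrt 2 = (1 + sqrt 2) ^ n"
proof (induction n)
  case (Suc n)
  have "of_int (pell_num (Suc n)) + of_int (pell_den (Suc n)) * sqrt 2
        = (1 + sqrt 2) * (of_int (pell_num n) + of_int (pell_den n) * sqrt 2)"
    by (simp add: algebra_simps)
  with Suc show ?case
    by simp
qed simp

lemma pell_den_sqrt2_diff: "of_int (pell_den n) * sqrt 2 - of_int (pell_num n) = - ((1 - sqrt 2) ^ n)"
proof (induction n)
  case (Suc n)
  have "of_int (pell_den (Suc n)) * sqrt 2 - of_int (pell_num (Suc n))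
        = (1 - sqrt 2) * (of_int (pell_den n) * sqrt 2 - of_int (pell_num n))"
    by (simp add: algebra_simps)
  with Suc show ?case
    by simp
qed simp

lemma pell_unimodular: "pell_num n * pell_den (Suc n) - pell_den n * pell_num (Suc n) = (-1) ^ n"
  by (induction n) (simp_all add: algebra_simps power2_eq_square)

lemma sqrt2_bounds: "1 < sqrt (2::real)" "sqrt (2::real) < 3/2"
proof -
  show "1 < sqrt (2::real)"
    by simp
  have "sqrt 2 < sqrt ((3/2)^2 :: real)"
    by (intro real_sqrt_less_mono) (simp add: power2_eq_square)
  then show "sqrt (2::real) < 3/2"
    by simp
qed

text \<open>The mediants of consecutive convergents (p_n + p_{n+1}) / (q_n + q_{n+1}) of sqrt 2
  are not convergents, yet q |q sqrt 2 - p| tends to 1 / sqrt 2 along them.\<close>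
lemma pell_mediant_err:
  fixes n :: nat
  defines "\<eta> \<equiv> of_int (pell_den n + pell_den (Suc n)) * sqrt 2 - of_int (pell_num n + pell_num (Suc n))"
  shows "\<bar>of_int (pell_den (Suc n)) * sqrt 2 - of_int (pell_num (Suc n))\<bar> < \<bar>\<eta>\<bar>"
    and "\<bar>\<eta>\<bar> \<le> \<bar>1 - sqrt 2\<bar> ^ n"
    and "2 * sqrt 2 * (of_int (pell_den n + pell_den (Suc n)) * \<bar>\<eta>\<bar>) \<le> 2 + \<eta>\<^sup>2"
proof -
  define Q where "Q = pell_den n + pell_den (Suc n)"
  define X where "X = (1 + sqrt 2) ^ n"
  define Y where "Y = (1 - sqrt 2) ^ n"
  have s: "1 < sqrt 2" "sqrt 2 < 3/2"
    by (rule sqrt2_bounds)+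
  have \<eta>: "\<eta> = - Y * (2 - sqrt 2)"
    using pell_den_sqrt2_diff[of n] pell_den_sqrt2_diff[of "Suc n"]
    by (simp add: \<eta>_def Y_def algebra_simps)
  have \<eta>1: "of_int (pell_den (Suc n)) * sqrt 2 - of_int (pell_num (Suc n)) = - Y * (1 - sqrt 2)"
    using pell_den_sqrt2_diff[of "Suc n"] by (simp add: Y_def)
  have "0 < \<bar>Y\<bar>"
    using s by (simp add: Y_def)
  then show "\<bar>of_int (pell_den (Suc n)) * sqrt 2 - of_int (pell_num (Suc n))\<bar> < \<bar>\<eta>\<bar>"
    using s unfolding \<eta> \<eta>1 abs_mult by (intro mult_strict_left_mono) auto
  show "\<bar>\<eta>\<bar> \<le> \<bar>1 - sqrt 2\<bar> ^ n"
    using s mult_right_le_one_le[of "\<bar>Y\<bar>" "2 - sqrt 2"] by (simp add: \<eta> Y_def abs_mult power_abs)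
  have den: "2 * sqrt 2 * of_int (pell_den m) = (1 + sqrt 2) ^ m - (1 - sqrt 2) ^ m" for m
    using pell_den_sqrt2_add[of m] pell_den_sqrt2_diff[of m] by (simp add: algebra_simps)
  have "2 * sqrt 2 * of_int Q
        = ((1 + sqrt 2) ^ n - (1 - sqrt 2) ^ n) + ((1 + sqrt 2) ^ Suc n - (1 - sqrt 2) ^ Suc n)"
    unfolding Q_def of_int_add distrib_left den ..
  also have "\<dots> = X * (2 + sqrt 2) - Y * (2 - sqrt 2)"
    by (simp add: X_def Y_def algebra_simps)
  finally have Q: "2 * sqrt 2 * of_int Q = X * (2 + sqrt 2) - Y * (2 - sqrt 2)" .
  have "2 * sqrt 2 * (of_int Q * \<eta>) = (X * (2 + sqrt 2) - Y * (2 - sqrt 2)) * (- Y * (2 - sqrt 2))"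
    by (simp only: Q \<eta> flip: mult.assoc)
  also have "\<dots> = - (X * Y) * ((2 + sqrt 2) * (2 - sqrt 2)) + \<eta>\<^sup>2"
    by (simp add: \<eta> power2_eq_square algebra_simps)
  also have "(2 + sqrt 2) * (2 - sqrt 2) = 2"
    by (simp add: algebra_simps)
  also have "X * Y = (-1) ^ n"
    by (simp add: X_def Y_def flip: power_mult_distrib) (simp add: algebra_simps)
  finally have "2 * sqrt 2 * (of_int Q * \<eta>) = \<eta>\<^sup>2 - 2 * (-1) ^ n"
    by simp
  then have "\<bar>2 * sqrt 2 * (of_int Q * \<eta>)\<bar> \<le> \<bar>\<eta>\<^sup>2\<bar> + \<bar>2 * (-1) ^ n\<bar>"
    by (simp only: abs_triangle_ineq4)
  then have "\<bar>2 * sqrt 2 * (of_int Q * \<eta>)\<bar> \<le> 2 + \<eta>\<^sup>2"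
    by (simp add: abs_mult power_abs)
  moreover have "0 \<le> Q"
    using pell_den_ge[of n] pell_den_ge[of "Suc n"] by (simp add: Q_def)
  ultimately show "2 * sqrt 2 * (of_int (pell_den n + pell_den (Suc n)) * \<bar>\<eta>\<bar>) \<le> 2 + \<eta>\<^sup>2"
    by (simp add: abs_mult Q_def)
qed

section \<open>Numbers equivalent to sqrt 2\<close>

locale sqrt2_equiv = irrational_cf +
  fixes A B C D :: int
  assumes unimodular: "\<bar>A * D - B * C\<bar> = 1"
    and alpha_eq: "\<alpha> = (of_int A * sqrt 2 + of_int B) / (of_int C * sqrt 2 + of_int D)"
begin

definition \<gamma> :: real where "\<gamma> = of_int C * sqrt 2 + of_int D"

lemma \<gamma>_nonzero: "\<gamma> \<noteq> 0"
proof
  assume "\<gamma> = 0"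
  then have "of_int C * sqrt 2 = of_int (- D)"
    by (simp add: \<gamma>_def)
  then have "C = 0 \<and> D = 0"
    using sqrt2_lin_indep by fastforce
  then show False
    using unimodular by simp
qed

lemma alpha_mult_\<gamma>: "\<alpha> * \<gamma> = of_int A * sqrt 2 + of_int B"
  using \<gamma>_nonzero alpha_eq by (simp add: \<gamma>_def)

lemma err_mult_\<gamma>:
  "(of_int q * \<alpha> - of_int p) * \<gamma> = of_int (q * A - p * C) * sqrt 2 - of_int (p * D - q * B)"
proof -
  have "(of_int q * \<alpha> - of_int p) * \<gamma> = of_int q * (\<alpha> * \<gamma>) - of_int p * \<gamma>"
    by (simp add: algebra_simps)
  then show ?thesis
    by (simp only: alpha_mult_\<gamma>) (simp add: \<gamma>_def algebra_simps)
qed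

definition \<kappa> :: real where "\<kappa> = 2 * sqrt 2 * \<bar>of_int C\<bar> * \<bar>\<gamma>\<bar> + \<gamma>\<^sup>2"

lemma \<kappa>_nonneg: "0 \<le> \<kappa>"
  by (simp add: \<kappa>_def)

text \<open>The integer P^2 - 2 Q^2 of the pulled-back pair is nonzero, hence at least 1 in absolute
  value; factoring it as -(Q sqrt 2 - P)(Q sqrt 2 + P) bounds the error from below.\<close>
lemma norm_form_lower_bound:
  fixes p q :: int
  assumes "1 \<le> q"
  shows "1 \<le> 2 * sqrt 2 * of_int q * \<bar>of_int q * \<alpha> - of_int p\<bar> + \<kappa> * \<bar>of_int q * \<alpha> - of_int p\<bar>\<^sup>2"
proof -
  define P where "P = p * D - q * B"
  define Q where "Q = q * A - p * C"
  define e where "e = \<bar>of_int q * \<alpha> - of_int p\<bar>"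
  define \<eta> where "\<eta> = of_int Q * sqrt 2 - of_int P"
  have \<eta>_abs: "\<bar>\<eta>\<bar> = e * \<bar>\<gamma>\<bar>"
    using err_mult_\<gamma>[of q p] by (simp add: \<eta>_def P_def Q_def e_def flip: abs_mult)
  have q_eq: "(A * D - B * C) * q = C * P + D * Q"
    by (simp add: P_def Q_def algebra_simps)
  have "P^2 - 2 * Q^2 \<noteq> 0"
  proof
    assume "P^2 - 2 * Q^2 = 0"
    then have "Q = 0" "P = 0"
      using int_sq_eq_twice_sq[of P Q] by simp_all
    then show False
      using q_eq unimodular assms by auto
  qed
  then have "1 \<le> \<bar>real_of_int (P^2 - 2 * Q^2)\<bar>"
    by (metis of_int_1_le_iff of_int_abs zero_less_abs_iff int_one_le_iff_zero_less)
  also have "real_of_int (P^2 - 2 * Q^2) = - \<eta> * (2 * of_int Q * sqrt 2 - \<eta>)"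
    by (simp add: \<eta>_def algebra_simps power2_eq_square)
  also have "\<bar>- \<eta> * (2 * of_int Q * sqrt 2 - \<eta>)\<bar> \<le> \<bar>\<eta>\<bar> * (2 * sqrt 2 * \<bar>of_int Q\<bar> + \<bar>\<eta>\<bar>)"
    unfolding abs_mult abs_minus_cancel
    by (intro mult_left_mono order.trans[OF abs_triangle_ineq4]) (simp_all add: abs_mult)
  also have "\<dots> = e * (2 * sqrt 2 * (\<bar>of_int Q\<bar> * \<bar>\<gamma>\<bar>)) + (e * \<bar>\<gamma>\<bar>)\<^sup>2"
    by (simp add: \<eta>_abs power2_eq_square algebra_simps)
  also have "\<dots> \<le> e * (2 * sqrt 2 * (of_int q + \<bar>of_int C\<bar> * (e * \<bar>\<gamma>\<bar>))) + (e * \<bar>\<gamma>\<bar>)\<^sup>2"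
  proof -
    have "of_int Q * \<gamma> = of_int ((A * D - B * C) * q) + of_int C * \<eta>"
      unfolding q_eq by (simp add: \<eta>_def \<gamma>_def algebra_simps)
    then have "\<bar>of_int Q * \<gamma>\<bar> \<le> \<bar>real_of_int ((A * D - B * C) * q)\<bar> + \<bar>of_int C * \<eta>\<bar>"
      by (simp only: abs_triangle_ineq)
    also have "\<bar>real_of_int ((A * D - B * C) * q)\<bar> = of_int q"
    proof -
      have "\<bar>(A * D - B * C) * q\<bar> = q"
        using unimodular assms by (simp add: abs_mult)
      then show ?thesis
        by (metis of_int_abs)
    qed
    finally have "\<bar>of_int Q\<bar> * \<bar>\<gamma>\<bar> \<le> of_int q + \<bar>of_int C\<bar> * (e * \<bar>\<gamma>\<bar>)"
      by (simp add: abs_mult \<eta>_abs)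
    then show ?thesis
      by (intro add_right_mono mult_left_mono) (simp_all add: e_def)
  qed
  also have "\<dots> = 2 * sqrt 2 * of_int q * e + \<kappa> * e\<^sup>2"
    by (simp add: \<kappa>_def power2_eq_square algebra_simps)
  finally show ?thesis
    by (simp add: e_def)
qed

theorem lagrange_ge: "ereal (1 / (2 * sqrt 2)) \<le> lagrange \<alpha>"
  unfolding lagrange_eq_Liminf_psi_rel
proof (rule Liminf_psi_rel_ge[of _ 0])
  fix z assume "ereal z < ereal (1 / (2 * sqrt 2))"
  then have g: "0 < 1 - 2 * sqrt 2 * z"
    by (simp add: field_simps)
  define \<epsilon> where "\<epsilon> = min 1 ((1 - 2 * sqrt 2 * z) / (\<kappa> + 1))"
  have \<epsilon>: "0 < \<epsilon>" "\<epsilon> \<le> 1" "\<kappa> * \<epsilon> \<le> 1 - 2 * sqrt 2 * z"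
    using g \<kappa>_nonneg by (auto simp: \<epsilon>_def min_def field_simps mult_left_mono)
  have "z \<le> of_int q * \<bar>of_int q * \<alpha> - of_int p\<bar>"
    if "1 \<le> q" "\<bar>of_int q * \<alpha> - of_int p\<bar> < \<epsilon>" for p q :: int
  proof -
    define e where "e = \<bar>of_int q * \<alpha> - of_int p\<bar>"
    have "\<kappa> * e\<^sup>2 \<le> \<kappa> * \<epsilon>"
    proof (intro mult_left_mono \<kappa>_nonneg)
      have "e * e \<le> e * 1"
        using that \<epsilon> by (intro mult_left_mono) (simp_all add: e_def)
      then have "e\<^sup>2 \<le> e"
        by (simp add: power2_eq_square)
      then show "e\<^sup>2 \<le> \<epsilon>"
        using that by (simp add: e_def)
    qed
    moreover have "1 \<le> 2 * sqrt 2 * of_int q * e + \<kappa> * e\<^sup>2"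
      using norm_form_lower_bound[OF that(1), of p] by (simp add: e_def)
    ultimately have "2 * sqrt 2 * z \<le> 2 * sqrt 2 * of_int q * e"
      using \<epsilon>(3) by linarith
    then show ?thesis
      by (simp add: e_def mult.assoc)
  qed
  then show "\<exists>\<epsilon>>0. \<forall>p q. True \<longrightarrow> 1 \<le> q \<longrightarrow>
      \<epsilon> \<le> \<bar>of_int q * \<alpha> - of_int p\<bar> \<or> z \<le> of_int q * \<bar>of_int q * \<alpha> - of_int p\<bar>"
    using \<epsilon>(1) by (metis not_le)
qed simp

text \<open>The image under the Moebius map of the lattice point (P, Q) of sqrt 2, normalised to a
  nonnegative denominator.\<close>
definition img_num :: "int \<Rightarrow> int \<Rightarrow> int" where
  "img_num P Q = sgn (C * P + D * Q) * (A * P + B * Q)"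

definition img_den :: "int \<Rightarrow> int \<Rightarrow> int" where
  "img_den P Q = \<bar>C * P + D * Q\<bar>"

lemma img_err:
  assumes "img_den P Q \<noteq> 0"
  shows "\<bar>of_int (img_den P Q) * \<alpha> - of_int (img_num P Q)\<bar> = \<bar>of_int Q * sqrt 2 - of_int P\<bar> / \<bar>\<gamma>\<bar>"
proof -
  have "(of_int (C * P + D * Q) * \<alpha> - of_int (A * P + B * Q)) * \<gamma>
        = of_int (A * D - B * C) * (of_int Q * sqrt 2 - of_int P)"
    using err_mult_\<gamma>[of "C * P + D * Q" "A * P + B * Q"] by (simp add: algebra_simps)
  moreover have "\<bar>real_of_int (A * D - B * C)\<bar> = 1"
    using unimodular by (metis of_int_1 of_int_abs)
  ultimately have "\<bar>of_int (C * P + D * Q) * \<alpha> - of_int (A * P + B * Q)\<bar> * \<bar>\<gamma>\<bar>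
                   = \<bar>of_int Q * sqrt 2 - of_int P\<bar>"
    by (metis abs_mult mult_1)
  moreover have "\<bar>of_int (img_den P Q) * \<alpha> - of_int (img_num P Q)\<bar>
                 = \<bar>of_int (C * P + D * Q) * \<alpha> - of_int (A * P + B * Q)\<bar>"
  proof -
    have "of_int (img_den P Q) * \<alpha> - of_int (img_num P Q)
          = of_int (sgn (C * P + D * Q)) * (of_int (C * P + D * Q) * \<alpha> - of_int (A * P + B * Q))"
      unfolding img_den_def img_num_def abs_sgn[of "C * P + D * Q"] by (simp add: algebra_simps)
    moreover have "\<bar>real_of_int (sgn (C * P + D * Q))\<bar> = 1"
      using assms by (simp add: img_den_def abs_sgn_eq flip: of_int_abs)
    ultimately show ?thesis
      by (simp add: img_den_def abs_mult)
  qed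
  ultimately show ?thesis
    using \<gamma>_nonzero by (simp add: field_simps)
qed

lemma img_den_approx:
  "\<bar>of_int (img_den P Q) - \<bar>of_int Q\<bar> * \<bar>\<gamma>\<bar>\<bar> \<le> \<bar>of_int C\<bar> * \<bar>of_int Q * sqrt 2 - of_int P\<bar>"
proof -
  have "of_int (C * P + D * Q) = of_int Q * \<gamma> - of_int C * (of_int Q * sqrt 2 - of_int P)"
    by (simp add: \<gamma>_def algebra_simps)
  then have "\<bar>of_int (img_den P Q) - \<bar>of_int Q * \<gamma>\<bar>\<bar>
             \<le> \<bar>(of_int Q * \<gamma> - of_int C * (of_int Q * sqrt 2 - of_int P)) - of_int Q * \<gamma>\<bar>"
    unfolding img_den_def of_int_abs by (metis abs_triangle_ineq3)
  then show ?thesis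
    by (simp add: abs_mult)
qed

lemma img_unimodular:
  assumes "img_den P Q \<noteq> 0" "img_den P' Q' \<noteq> 0"
  shows "\<bar>img_num P Q * img_den P' Q' - img_den P Q * img_num P' Q'\<bar> = \<bar>P * Q' - Q * P'\<bar>"
proof -
  have "(A * P + B * Q) * (C * P' + D * Q') - (C * P + D * Q) * (A * P' + B * Q')
        = (A * D - B * C) * (P * Q' - Q * P')"
    by (simp add: algebra_simps)
  moreover have "img_num P Q * img_den P' Q' - img_den P Q * img_num P' Q'
      = sgn (C * P + D * Q) * sgn (C * P' + D * Q')
        * ((A * P + B * Q) * (C * P' + D * Q') - (C * P + D * Q) * (A * P' + B * Q'))"
    unfolding img_num_def img_den_def abs_sgn[of "C * P + D * Q"] abs_sgn[of "C * P' + D * Q'"]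
    by (simp add: algebra_simps)
  ultimately show ?thesis
    using assms unimodular by (simp add: img_den_def abs_mult)
qed

lemma img_qerr_le:
  assumes "img_den P Q \<noteq> 0" "0 \<le> Q"
  defines "\<eta> \<equiv> of_int Q * sqrt 2 - of_int P"
  shows "of_int (img_den P Q) * \<bar>of_int (img_den P Q) * \<alpha> - of_int (img_num P Q)\<bar>
           \<le> of_int Q * \<bar>\<eta>\<bar> + \<bar>of_int C\<bar> / \<bar>\<gamma>\<bar> * \<eta>\<^sup>2"
proof -
  have "of_int (img_den P Q) \<le> of_int Q * \<bar>\<gamma>\<bar> + \<bar>of_int C\<bar> * \<bar>\<eta>\<bar>"
    using img_den_approx[of P Q] assms(2) by (simp add: \<eta>_def)
  then have "of_int (img_den P Q) * (\<bar>\<eta>\<bar> / \<bar>\<gamma>\<bar>) \<le> (of_int Q * \<bar>\<gamma>\<bar> + \<bar>of_int C\<bar> * \<bar>\<eta>\<bar>) * (\<bar>\<eta>\<bar> / \<bar>\<gamma>\<bar>)"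
    by (rule mult_right_mono) simp
  also have "\<dots> = of_int Q * \<bar>\<eta>\<bar> + \<bar>of_int C\<bar> / \<bar>\<gamma>\<bar> * \<eta>\<^sup>2"
    using \<gamma>_nonzero by (simp add: power2_eq_square field_simps)
  finally show ?thesis
    by (simp only: img_err[OF assms(1)] \<eta>_def)
qed

lemma non_convergent_ratio_qerr_le:
  assumes w: "1 / sqrt 2 < w"
  obtains p q where "non_convergent_ratio \<alpha> p q" "1 \<le> q" "T \<le> real_of_int q"
    and "of_int q * \<bar>of_int q * \<alpha> - of_int p\<bar> \<le> w"
proof -
  define g where "g = \<bar>\<gamma>\<bar>"
  define c where "c = \<bar>real_of_int C\<bar>"
  have g: "0 < g" and c: "0 \<le> c"
    using \<gamma>_nonzero by (simp_all add: g_def c_def)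
  have s: "1 < sqrt 2" "sqrt 2 < 3/2"
    by (rule sqrt2_bounds)+
  define K where "K = 1 / (2 * sqrt 2) + c / g"
  have K: "0 \<le> K"
    using g c by (simp add: K_def)
  define \<epsilon> where "\<epsilon> = (w - 1 / sqrt 2) / (K + 1)"
  have \<epsilon>: "0 < \<epsilon>"
    using w K by (simp add: \<epsilon>_def)
  have "K * \<epsilon> \<le> (K + 1) * \<epsilon>"
    using \<epsilon> by simp
  also have "\<dots> = w - 1 / sqrt 2"
    using K by (simp add: \<epsilon>_def)
  finally have K\<epsilon>: "K * \<epsilon> \<le> w - 1 / sqrt 2" .
  obtain N\<^sub>1 :: nat where N\<^sub>1: "(2 * c + \<bar>T\<bar> + 1) / g < real N\<^sub>1"
    using reals_Archimedean2 by blast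
  obtain N\<^sub>2 where N\<^sub>2: "\<bar>1 - sqrt 2\<bar> ^ N\<^sub>2 < \<epsilon>"
    using real_arch_pow_inv[OF \<epsilon>, of "\<bar>1 - sqrt 2\<bar>"] s by auto
  define n where "n = max N\<^sub>1 N\<^sub>2"
  define P' where "P' = pell_num (Suc n)"
  define Q' where "Q' = pell_den (Suc n)"
  define P where "P = pell_num n + P'"
  define Q where "Q = pell_den n + Q'"
  define \<eta> where "\<eta> = of_int Q * sqrt 2 - of_int P"
  define \<eta>' where "\<eta>' = of_int Q' * sqrt 2 - of_int P'"
  have \<eta>'_less: "\<bar>\<eta>'\<bar> < \<bar>\<eta>\<bar>" and \<eta>_le: "\<bar>\<eta>\<bar> \<le> \<bar>1 - sqrt 2\<bar> ^ n"
    and mediant: "2 * sqrt 2 * (of_int Q * \<bar>\<eta>\<bar>) \<le> 2 + \<eta>\<^sup>2"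
    using pell_mediant_err[of n] by (simp_all only: \<eta>_def \<eta>'_def P_def Q_def P'_def Q'_def)
  have "\<bar>1 - sqrt 2\<bar> ^ n \<le> \<bar>1 - sqrt 2\<bar> ^ N\<^sub>2"
    using s by (intro power_decreasing) (auto simp: n_def)
  moreover have "\<bar>1 - sqrt 2\<bar> ^ n \<le> 1"
    using s by (intro power_le_one) auto
  ultimately have \<eta>: "\<bar>\<eta>\<bar> < \<epsilon>" "\<bar>\<eta>\<bar> \<le> 1"
    using N\<^sub>2 \<eta>_le by linarith+
  then have \<eta>2: "\<eta>\<^sup>2 \<le> \<epsilon>"
    using mult_right_le_one_le[of "\<bar>\<eta>\<bar>" "\<bar>\<eta>\<bar>"] by (simp add: power2_eq_square)
  have "(2 * c + \<bar>T\<bar> + 1) / g < of_int (pell_den n)"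
    using N\<^sub>1 pell_den_ge[of n] by (simp add: n_def)
  then have big: "2 * c + \<bar>T\<bar> + 1 < of_int (pell_den n) * g"
    using g by (simp add: field_simps)
  have Q'_ge: "pell_den n \<le> Q'" and "0 \<le> pell_den n"
    using pell_num_pos[of n] pell_den_ge[of n] by (simp_all add: Q'_def)
  then have Q_nonneg: "0 \<le> Q" "0 \<le> Q'"
    by (simp_all add: Q_def)
  define q where "q = img_den P Q"
  define q' where "q' = img_den P' Q'"
  have "\<bar>of_int q - of_int Q * g\<bar> \<le> c * \<bar>\<eta>\<bar>" "\<bar>of_int q' - of_int Q' * g\<bar> \<le> c * \<bar>\<eta>'\<bar>"
    using img_den_approx[of P Q] img_den_approx[of P' Q'] Q_nonneg
    by (simp_all add: q_def q'_def g_def c_def \<eta>_def \<eta>'_def)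
  moreover have "c * \<bar>\<eta>\<bar> \<le> c" "c * \<bar>\<eta>'\<bar> \<le> c"
    using \<eta> \<eta>'_less c by (simp_all add: mult_left_le)
  moreover have "of_int (pell_den n) * g \<le> of_int Q' * g"
    using g Q'_ge by simp
  moreover have "of_int Q * g = of_int Q' * g + of_int (pell_den n) * g"
    by (simp add: Q_def algebra_simps)
  ultimately have q'_q: "1 \<le> q'" "q' < q" and qT: "T \<le> real_of_int q"
    using big by linarith+
  show thesis
  proof (rule that)
    show "1 \<le> q" "T \<le> real_of_int q"
      using q'_q qT by simp_all
    have "\<bar>of_int q' * \<alpha> - of_int (img_num P' Q')\<bar> < \<bar>of_int q * \<alpha> - of_int (img_num P Q)\<bar>"
      using img_err[of P Q] img_err[of P' Q'] q'_q \<eta>'_less g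
      by (simp add: q_def q'_def \<eta>_def \<eta>'_def g_def divide_strict_right_mono)
    moreover have "\<bar>img_num P Q * q' - q * img_num P' Q'\<bar> = 1"
      using img_unimodular[of P Q P' Q'] q'_q pell_unimodular[of n]
      by (simp add: q_def q'_def P_def Q_def P'_def Q'_def algebra_simps)
    ultimately show "non_convergent_ratio \<alpha> (img_num P Q) q"
      unfolding non_convergent_ratio_def using q'_q not_convergent_if_better_neighbour by blast
    have "of_int q * \<bar>of_int q * \<alpha> - of_int (img_num P Q)\<bar> \<le> of_int Q * \<bar>\<eta>\<bar> + c / g * \<eta>\<^sup>2"
      using img_qerr_le[of P Q] q'_q Q_nonneg by (simp add: q_def \<eta>_def c_def g_def)
    also have "\<dots> \<le> 1 / sqrt 2 + K * \<eta>\<^sup>2"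
      using mediant s by (simp add: K_def field_simps)
    also have "\<dots> \<le> w"
      using \<eta>2 K K\<epsilon> mult_left_mono[of "\<eta>\<^sup>2" \<epsilon> K] by linarith
    finally show "of_int q * \<bar>of_int q * \<alpha> - of_int (img_num P Q)\<bar> \<le> w" .
  qed
qed

lemma kfrak_star_le: "kfrak_star \<alpha> \<le> ereal (1 / sqrt 2)"
proof (rule dense_ge)
  fix x assume "ereal (1 / sqrt 2) < x"
  then obtain w where w: "1 / sqrt 2 < w" "ereal w < x"
    using ereal_dense2 by (metis ereal_less(1) less_ereal.simps(1))
  have "kfrak_star \<alpha> \<le> ereal w"
    unfolding kfrak_star_eq_Liminf_psi_rel
    by (rule Liminf_psi_rel_le) (meson non_convergent_ratio_qerr_le[OF w(1)])
  then show "kfrak_star \<alpha> \<le> x"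
    using w(2) by simp
qed

theorem kfrak_eq_twice_lagrange: "kfrak_star \<alpha> = kfrak \<alpha> \<and> kfrak \<alpha> = 2 * lagrange \<alpha>"
proof -
  have "ereal (1 / sqrt 2) = 2 * ereal (1 / (2 * sqrt 2))"
    by simp
  also have "\<dots> \<le> 2 * lagrange \<alpha>"
    using lagrange_ge by (intro ereal_mult_left_mono) auto
  finally show ?thesis
    using kfrak_star_le kfrak_le_kfrak_star kfrak_ge_twice_lagrange by (meson antisym order.trans)
qed

end

theorem mainTheorem15:
  fixes \<alpha> :: real
  assumes "\<alpha> \<notin> \<rat>"
  shows "kfrak_star \<alpha> \<ge> kfrak \<alpha> \<and> kfrak \<alpha> \<ge> 2 * lagrange \<alpha> \<and>
         (moebius_equiv \<alpha> (sqrt 2) \<longrightarrow>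
            kfrak_star \<alpha> = kfrak \<alpha> \<and> kfrak \<alpha> = 2 * lagrange \<alpha>)"
proof -
  interpret irrational_cf \<alpha>
    using assms by unfold_locales
  have "kfrak_star \<alpha> = kfrak \<alpha> \<and> kfrak \<alpha> = 2 * lagrange \<alpha>" if equiv: "moebius_equiv \<alpha> (sqrt 2)"
  proof -
    obtain a b c d :: int where "\<bar>a * d - b * c\<bar> = 1"
      and "\<alpha> = (of_int a * sqrt 2 + of_int b) / (of_int c * sqrt 2 + of_int d)"
      using equiv unfolding moebius_equiv_def by blast
    then interpret sqrt2_equiv \<alpha> a b c d
      by unfold_locales
    show ?thesis
      by (rule kfrak_eq_twice_lagrange)
  qed
  then show ?thesis
    using kfrak_le_kfrak_star kfrak_ge_twice_lagrange by blast
qed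

end
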